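(* Let $\lambda>0$ and $\mu\ge0$ be reals and let $(G_n)_{n\ge1}$ be elements of $\mathcal H$ such that the infinite product $\prod_n G_n$ is of type $(\lambda,\mu)$. Then $\prod_{n\ge1}G_n$ converges in $\mathcal H$ to an element $G$ of order at most $\mu$.
   Context: Let $p$ be an odd prime. $\mathcal H$ is the ring of power series in $\mathbb Q_p[[x]]$ converging on the open unit disc of $\mathbb C_p$, with its Fréchet topology given by the norms $\|f\|_\rho=\sup_{|z|_p\le\rho}|f(z)|_p$, $0<\rho<1$; put $\|f\|_1=\sup_{\rho<1}\|f\|_\rho\in[0,\infty]$. Let $\rho_0=p^{-1/(p-1)}$ and, for $0<\rho<1$, let $n_0(\rho)$ be the smallest integer $\ge0$ with $\rho^{p^{n_0(\rho)}}\le\rho_0$. A product $\prod_nG_n$ is of type $(\lambda,\mu)$ if (1) $\|G_n\|_1\le p^{\mu}$ for all $n$, and (2) there is a constant $\nu$ such that for every real $0<\rho<1$ and every $n\ge n_0(\rho)$, $\|G_n-1\|_\rho\le p^{\nu}p^{-\lambda(n-n_0(\rho))}$. The order of $G\in\mathcal H$ is the infimum of the reals $h$ such that $\sup_{m\ge0}p^{-mh}\|G\|_{\rho^{1/p^m}}<\infty$ for some $\rho\in(0,1)$. *)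

theory Defs
  imports Complex_Main "HOL-Library.Extended_Real" "HOL-Computational_Algebra.Primes"
begin

definition padic_val_rat :: "nat \<Rightarrow> rat \<Rightarrow> int" where
  "padic_val_rat p r = (let (a, b) = quotient_of r in
      int (multiplicity (int p) a) - int (multiplicity (int p) b))"

definition qabs :: "nat \<Rightarrow> rat \<Rightarrow> real" where
  "qabs p r = (if r = 0 then 0 else real p powr (- real_of_int (padic_val_rat p r)))"

section \<open>Q_p as the completion of Q: classes of p-adic Cauchy sequences\<close>

definition qp_cauchy :: "nat \<Rightarrow> (nat \<Rightarrow> rat) \<Rightarrow> bool" where
  "qp_cauchy p X \<longleftrightarrow> (\<forall>e>0. \<exists>N. \<forall>m\<ge>N. \<forall>n\<ge>N. qabs p (X m - X n) < e)"

definition qp_equiv :: "nat \<Rightarrow> (nat \<Rightarrow> rat) \<Rightarrow> (nat \<Rightarrow> rat) \<Rightarrow> bool" where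
  "qp_equiv p X Y \<longleftrightarrow> qp_cauchy p X \<and> qp_cauchy p Y \<and> (\<lambda>n. qabs p (X n - Y n)) \<longlonglongrightarrow> 0"

type_synonym qp = "(nat \<Rightarrow> rat) set"

definition qp_of :: "nat \<Rightarrow> (nat \<Rightarrow> rat) \<Rightarrow> qp" where
  "qp_of p X = {Y. qp_equiv p X Y}"

definition Qp :: "nat \<Rightarrow> qp set" where
  "Qp p = {qp_of p X | X. qp_cauchy p X}"

definition qp_rep :: "qp \<Rightarrow> nat \<Rightarrow> rat" where
  "qp_rep a = (SOME X. X \<in> a)"

definition qp_add :: "nat \<Rightarrow> qp \<Rightarrow> qp \<Rightarrow> qp" where
  "qp_add p a b = qp_of p (\<lambda>n. qp_rep a n + qp_rep b n)"

definition qp_mult :: "nat \<Rightarrow> qp \<Rightarrow> qp \<Rightarrow> qp" where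
  "qp_mult p a b = qp_of p (\<lambda>n. qp_rep a n * qp_rep b n)"

definition qp_neg :: "nat \<Rightarrow> qp \<Rightarrow> qp" where
  "qp_neg p a = qp_of p (\<lambda>n. - qp_rep a n)"

definition qp_zero :: "nat \<Rightarrow> qp" where
  "qp_zero p = qp_of p (\<lambda>_. 0)"

definition qp_one :: "nat \<Rightarrow> qp" where
  "qp_one p = qp_of p (\<lambda>_. 1)"

definition qp_abs :: "nat \<Rightarrow> qp \<Rightarrow> real" where
  "qp_abs p a = lim (\<lambda>n. qabs p (qp_rep a n))"

type_synonym pser = "nat \<Rightarrow> qp"

definition ps_one :: "nat \<Rightarrow> pser" where
  "ps_one p = (\<lambda>k. if k = 0 then qp_one p else qp_zero p)"

definition ps_sub :: "nat \<Rightarrow> pser \<Rightarrow> pser \<Rightarrow> pser" where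
  "ps_sub p f g = (\<lambda>k. qp_add p (f k) (qp_neg p (g k)))"

definition ps_mult :: "nat \<Rightarrow> pser \<Rightarrow> pser \<Rightarrow> pser" where
  "ps_mult p f g = (\<lambda>k. foldr (qp_add p)
      (map (\<lambda>i. qp_mult p (f i) (g (k - i))) [0..<Suc k]) (qp_zero p))"

text \<open>Membership in H: coefficients in Q_p and the series converges on the open unit
  disc of C_p, i.e. |a_k|_p r^k tends to 0 for every 0 < r < 1.\<close>
definition inH :: "nat \<Rightarrow> pser \<Rightarrow> bool" where
  "inH p f \<longleftrightarrow> (\<forall>k. f k \<in> Qp p) \<and>
     (\<forall>r. 0 < r \<and> r < 1 \<longrightarrow> (\<lambda>k. qp_abs p (f k) * r ^ k) \<longlonglongrightarrow> 0)"

definition gnorm :: "nat \<Rightarrow> real \<Rightarrow> pser \<Rightarrow> real" where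
  "gnorm p r f = (SUP k. qp_abs p (f k) * r ^ k)"

definition rho0 :: "nat \<Rightarrow> real" where
  "rho0 p = real p powr (- 1 / (real p - 1))"

definition n0 :: "nat \<Rightarrow> real \<Rightarrow> nat" where
  "n0 p r = (LEAST n. r ^ (p ^ n) \<le> rho0 p)"

definition pprod :: "nat \<Rightarrow> (nat \<Rightarrow> pser) \<Rightarrow> nat \<Rightarrow> pser" where
  "pprod p G N = foldr (\<lambda>n acc. ps_mult p (G n) acc) [1..<Suc N] (ps_one p)"

text \<open>The product of (G_n)_{n>=1} is of type (lambda, mu). The condition
  ||G_n||_1 \<le> p^mu is written as ||G_n||_r \<le> p^mu for all 0<r<1.\<close>
definition prod_type :: "nat \<Rightarrow> (nat \<Rightarrow> pser) \<Rightarrow> real \<Rightarrow> real \<Rightarrow> bool" where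
  "prod_type p G lam mu \<longleftrightarrow>
     (\<forall>n\<ge>1. \<forall>r. 0 < r \<and> r < 1 \<longrightarrow> gnorm p r (G n) \<le> real p powr mu) \<and>
     (\<exists>nu::real. \<forall>r. 0 < r \<and> r < 1 \<longrightarrow> (\<forall>n\<ge>1. n \<ge> n0 p r \<longrightarrow>
        gnorm p r (ps_sub p (G n) (ps_one p))
          \<le> real p powr nu * real p powr (- lam * (real n - real (n0 p r)))))"

definition conv_H :: "nat \<Rightarrow> (nat \<Rightarrow> pser) \<Rightarrow> pser \<Rightarrow> bool" where
  "conv_H p F g \<longleftrightarrow> (\<forall>r. 0 < r \<and> r < 1 \<longrightarrow> (\<lambda>N. gnorm p r (ps_sub p (F N) g)) \<longlonglongrightarrow> 0)"

definition order_H :: "nat \<Rightarrow> pser \<Rightarrow> ereal" where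
  "order_H p g = Inf {ereal h | h. \<exists>r. 0 < r \<and> r < 1 \<and>
      bdd_above (range (\<lambda>m::nat. real p powr (- real m * h) * gnorm p (r powr (1 / real p ^ m)) g))}"

end

(* For a fixed radius r the Gauss norm ||.||_r is ultrametric and submultiplicative. By the type
   condition, the factors G_n with n < n0(r) have norm at most p^mu, and for n >= n0(r) the
   factor G_n differs from 1 by at most p^nu q^(n - n0(r)), where q = p^(-lambda) < 1. Hence every
   partial product has norm at most M(r) = p^(mu n0(r)) exp(p^nu / (1 - q)), and two partial
   products beyond the index N differ by at most M(r) p^nu q^(N + 1 - n0(r)). The coefficients
   therefore converge in the complete field Q_p, and the limit G satisfies ||G||_r <= M(r) and is
   the limit of the partial products in every norm ||.||_r. Finally n0(r^(1/p^m)) <= n0(r) + m,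
   so ||G||_(r^(1/p^m)) <= p^(mu m) M(r): the order of G is at most mu. *)

theory Submission
  imports Defs "HOL-Analysis.Infinite_Products"
begin

section \<open>The p-adic absolute value on the rationals\<close>

lemma multiplicity_add_ge_min:
  fixes p x y :: "'a :: factorial_semiring"
  assumes "\<not> is_unit p" "x + y \<noteq> 0"
  shows "min (multiplicity p x) (multiplicity p y) \<le> multiplicity p (x + y)"
proof -
  let ?m = "min (multiplicity p x) (multiplicity p y)"
  have "p ^ ?m dvd x" "p ^ ?m dvd y" by (simp_all add: multiplicity_dvd')
  then show ?thesis using assms by (intro multiplicity_geI) auto
qed

lemma rat_eq_of_int_div:
  fixes x :: rat
  obtains a b :: int where "b > 0" "x = of_int a / of_int b"
proof -
  obtain a b where q: "quotient_of x = (a, b)" by fastforce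
  show thesis by (rule that[OF quotient_of_denom_pos[OF q] quotient_of_div[OF q]])
qed

locale padic =
  fixes p :: nat
  assumes prime_p: "prime p"
begin

lemma real_p_gt_1: "real p > 1"
  using prime_gt_1_nat[OF prime_p] by simp

lemma padic_val_rat_of_int_div:
  fixes a b :: int
  assumes "a \<noteq> 0" "b \<noteq> 0"
  shows "padic_val_rat p (of_int a / of_int b) =
           int (multiplicity (int p) a) - int (multiplicity (int p) b)"
proof -
  obtain a' b' where q: "quotient_of (of_int a / of_int b) = (a', b')" by fastforce
  have "b' > 0" using quotient_of_denom_pos[OF q] .
  have eq: "(of_int a / of_int b :: rat) = of_int a' / of_int b'" using quotient_of_div[OF q] .
  have "a' \<noteq> 0" using eq assms \<open>b' > 0\<close> by auto
  have "(of_int (a * b') :: rat) = of_int (a' * b)"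
    using eq assms \<open>b' > 0\<close> by (simp add: field_simps)
  then have "multiplicity (int p) (a * b') = multiplicity (int p) (a' * b)"
    by (simp only: of_int_eq_iff)
  then have "multiplicity (int p) a + multiplicity (int p) b' =
             multiplicity (int p) a' + multiplicity (int p) b"
    using prime_p assms \<open>a' \<noteq> 0\<close> \<open>b' > 0\<close> by (simp add: prime_elem_multiplicity_mult_distrib)
  then show ?thesis by (simp add: padic_val_rat_def q)
qed

lemma padic_val_rat_mult:
  assumes "x \<noteq> 0" "y \<noteq> 0"
  shows "padic_val_rat p (x * y) = padic_val_rat p x + padic_val_rat p y"
proof -
  obtain a b where x: "b > 0" "x = of_int a / of_int b" by (rule rat_eq_of_int_div)
  obtain c d where y: "d > 0" "y = of_int c / of_int d" by (rule rat_eq_of_int_div)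
  have "a \<noteq> 0" "c \<noteq> 0" using x y assms by auto
  have "x * y = of_int (a * c) / of_int (b * d)" using x y by simp
  then have "padic_val_rat p (x * y) =
      int (multiplicity (int p) (a * c)) - int (multiplicity (int p) (b * d))"
    using padic_val_rat_of_int_div[of "a * c" "b * d"] x y \<open>a \<noteq> 0\<close> \<open>c \<noteq> 0\<close> by simp
  then show ?thesis
    using padic_val_rat_of_int_div x y \<open>a \<noteq> 0\<close> \<open>c \<noteq> 0\<close> prime_p
    by (simp add: prime_elem_multiplicity_mult_distrib)
qed

lemma padic_val_rat_add_ge_min:
  assumes "x \<noteq> 0" "y \<noteq> 0" "x + y \<noteq> 0"
  shows "min (padic_val_rat p x) (padic_val_rat p y) \<le> padic_val_rat p (x + y)"
proof -
  obtain a b where x: "b > 0" "x = of_int a / of_int b" by (rule rat_eq_of_int_div)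
  obtain c d where y: "d > 0" "y = of_int c / of_int d" by (rule rat_eq_of_int_div)
  let ?v = "multiplicity (int p)"
  have "a \<noteq> 0" "c \<noteq> 0" using x y assms by auto
  have sum: "x + y = of_int (a * d + c * b) / of_int (b * d)"
    using x y by (simp add: field_simps)
  then have "a * d + c * b \<noteq> 0" using assms by (metis div_0 of_int_0)
  then have "min (?v (a * d)) (?v (c * b)) \<le> ?v (a * d + c * b)"
    using prime_p by (intro multiplicity_add_ge_min) (auto simp: prime_elem_not_unit)
  then have "min (?v a + ?v d) (?v c + ?v b) \<le> ?v (a * d + c * b)"
    using prime_p \<open>a \<noteq> 0\<close> \<open>c \<noteq> 0\<close> x y by (simp add: prime_elem_multiplicity_mult_distrib)
  moreover have "padic_val_rat p (x + y) = int (?v (a * d + c * b)) - int (?v (b * d))"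
    unfolding sum using \<open>a * d + c * b \<noteq> 0\<close> x y by (intro padic_val_rat_of_int_div) auto
  moreover have "?v (b * d) = ?v b + ?v d"
    using prime_p x y by (simp add: prime_elem_multiplicity_mult_distrib)
  moreover have "padic_val_rat p x = int (?v a) - int (?v b)"
    using x \<open>a \<noteq> 0\<close> by (simp add: padic_val_rat_of_int_div)
  moreover have "padic_val_rat p y = int (?v c) - int (?v d)"
    using y \<open>c \<noteq> 0\<close> by (simp add: padic_val_rat_of_int_div)
  ultimately show ?thesis by linarith
qed

lemma padic_val_rat_uminus: "padic_val_rat p (- x) = padic_val_rat p x"
proof -
  obtain a b where x: "b > 0" "x = of_int a / of_int b" by (rule rat_eq_of_int_div)
  show ?thesis
  proof (cases "a = 0")
    case False
    have "multiplicity (int p) (- a) = multiplicity (int p) a"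
      using multiplicity_normalize_right[of "int p" "- a"] multiplicity_normalize_right[of "int p" a]
      by simp
    moreover have "padic_val_rat p (of_int (- a) / of_int b) =
        int (multiplicity (int p) (- a)) - int (multiplicity (int p) b)"
      using x False by (intro padic_val_rat_of_int_div) auto
    ultimately show ?thesis using x False by (simp add: padic_val_rat_of_int_div)
  qed (use x in simp)
qed

lemma qabs_nonneg: "qabs p x \<ge> 0"
  by (simp add: qabs_def)

lemma qabs_zero [simp]: "qabs p 0 = 0"
  by (simp add: qabs_def)

lemma qabs_mult: "qabs p (x * y) = qabs p x * qabs p y"
proof (cases "x = 0 \<or> y = 0")
  case False
  then show ?thesis by (simp add: qabs_def padic_val_rat_mult powr_add[symmetric])
qed (auto simp: qabs_def)

lemma qabs_one: "qabs p 1 = 1"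
  using padic_val_rat_of_int_div[of 1 1] prime_gt_0_nat[OF prime_p] by (simp add: qabs_def)

lemma qabs_uminus: "qabs p (- x) = qabs p x"
  by (simp add: qabs_def padic_val_rat_uminus)

lemma qabs_minus_commute: "qabs p (x - y) = qabs p (y - x)"
  using qabs_uminus[of "x - y"] by simp

lemma qabs_add_le_max: "qabs p (x + y) \<le> max (qabs p x) (qabs p y)"
proof (cases "x = 0 \<or> y = 0 \<or> x + y = 0")
  case True
  then show ?thesis using qabs_nonneg[of x] qabs_nonneg[of y] by auto
next
  case False
  let ?e = "\<lambda>z. real p powr - real_of_int (padic_val_rat p z)"
  have "?e (x + y) \<le> real p powr - real_of_int (min (padic_val_rat p x) (padic_val_rat p y))"
    using padic_val_rat_add_ge_min[of x y] False real_p_gt_1 by (intro powr_mono) auto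
  also have "\<dots> = max (?e x) (?e y)"
    using real_p_gt_1 by (cases "padic_val_rat p x \<le> padic_val_rat p y") (simp_all add: max_def)
  finally show ?thesis using False by (simp add: qabs_def)
qed

lemma qabs_add_le: "qabs p (x + y) \<le> qabs p x + qabs p y"
  using qabs_add_le_max[of x y] qabs_nonneg[of x] qabs_nonneg[of y] by linarith

lemma abs_qabs_diff_le: "\<bar>qabs p x - qabs p y\<bar> \<le> qabs p (x - y)"
  using qabs_add_le[of "x - y" y] qabs_add_le[of "y - x" x] qabs_minus_commute[of x y] by simp


section \<open>Arithmetic of Cauchy classes\<close>

lemma qp_cauchy_const: "qp_cauchy p (\<lambda>_. c)"
  unfolding qp_cauchy_def by simp

lemma convergent_qabs_cauchy:
  assumes "qp_cauchy p X"
  shows "convergent (\<lambda>n. qabs p (X n))"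
proof -
  have "Cauchy (\<lambda>n. qabs p (X n))"
  proof (rule metric_CauchyI)
    fix e :: real
    assume "e > 0"
    then obtain N where "\<forall>m\<ge>N. \<forall>n\<ge>N. qabs p (X m - X n) < e"
      using assms unfolding qp_cauchy_def by blast
    then show "\<exists>M. \<forall>m\<ge>M. \<forall>n\<ge>M. dist (qabs p (X m)) (qabs p (X n)) < e"
      using abs_qabs_diff_le unfolding dist_real_def by (meson le_less_trans)
  qed
  then show ?thesis by (simp add: Cauchy_convergent_iff)
qed

lemma qp_cauchy_bounded:
  assumes "qp_cauchy p X"
  obtains B where "B > 0" "\<And>n. qabs p (X n) \<le> B"
proof -
  obtain B where B: "B > 0" "\<And>n. norm (qabs p (X n)) \<le> B"
    using convergent_qabs_cauchy[OF assms] by (metis convergent_imp_Bseq BseqE)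
  show thesis by (rule that[OF B(1)]) (use B(2) in \<open>simp add: qabs_nonneg\<close>)
qed

lemma qp_cauchy_add:
  assumes "qp_cauchy p X" "qp_cauchy p Y"
  shows "qp_cauchy p (\<lambda>n. X n + Y n)"
  unfolding qp_cauchy_def
proof (intro allI impI)
  fix e :: real
  assume "e > 0"
  obtain N1 where N1: "\<forall>m\<ge>N1. \<forall>n\<ge>N1. qabs p (X m - X n) < e"
    using assms(1) \<open>e > 0\<close> unfolding qp_cauchy_def by blast
  obtain N2 where N2: "\<forall>m\<ge>N2. \<forall>n\<ge>N2. qabs p (Y m - Y n) < e"
    using assms(2) \<open>e > 0\<close> unfolding qp_cauchy_def by blast
  show "\<exists>N. \<forall>m\<ge>N. \<forall>n\<ge>N. qabs p (X m + Y m - (X n + Y n)) < e"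
  proof (intro exI allI impI)
    fix m n
    assume "max N1 N2 \<le> m" "max N1 N2 \<le> n"
    then have "qabs p (X m - X n) < e" "qabs p (Y m - Y n) < e" using N1 N2 by auto
    moreover have "qabs p (X m + Y m - (X n + Y n)) \<le> max (qabs p (X m - X n)) (qabs p (Y m - Y n))"
      using qabs_add_le_max[of "X m - X n" "Y m - Y n"] by (simp add: algebra_simps)
    ultimately show "qabs p (X m + Y m - (X n + Y n)) < e" by linarith
  qed
qed

lemma qp_cauchy_uminus:
  assumes "qp_cauchy p X"
  shows "qp_cauchy p (\<lambda>n. - X n)"
  using assms unfolding qp_cauchy_def by (simp add: qabs_minus_commute)

lemma qp_cauchy_diff:
  assumes "qp_cauchy p X" "qp_cauchy p Y"
  shows "qp_cauchy p (\<lambda>n. X n - Y n)"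
  using qp_cauchy_add[OF assms(1) qp_cauchy_uminus[OF assms(2)]] by simp

lemma qp_cauchy_mult:
  assumes "qp_cauchy p X" "qp_cauchy p Y"
  shows "qp_cauchy p (\<lambda>n. X n * Y n)"
  unfolding qp_cauchy_def
proof (intro allI impI)
  fix e :: real
  assume "e > 0"
  obtain BX where BX: "BX > 0" "\<And>n. qabs p (X n) \<le> BX" using qp_cauchy_bounded[OF assms(1)] by blast
  obtain BY where BY: "BY > 0" "\<And>n. qabs p (Y n) \<le> BY" using qp_cauchy_bounded[OF assms(2)] by blast
  have "e / BY > 0" "e / BX > 0" using \<open>e > 0\<close> BX BY by auto
  then obtain N1 N2 where N1: "\<forall>m\<ge>N1. \<forall>n\<ge>N1. qabs p (X m - X n) < e / BY"
    and N2: "\<forall>m\<ge>N2. \<forall>n\<ge>N2. qabs p (Y m - Y n) < e / BX"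
    using assms unfolding qp_cauchy_def by blast
  show "\<exists>N. \<forall>m\<ge>N. \<forall>n\<ge>N. qabs p (X m * Y m - X n * Y n) < e"
  proof (intro exI allI impI)
    fix m n
    assume "max N1 N2 \<le> m" "max N1 N2 \<le> n"
    then have dX: "qabs p (X m - X n) < e / BY" and dY: "qabs p (Y m - Y n) < e / BX"
      using N1 N2 by auto
    have "qabs p (X m * (Y m - Y n)) < e"
    proof -
      have "qabs p (X m * (Y m - Y n)) \<le> BX * qabs p (Y m - Y n)"
        using BX by (simp add: qabs_mult mult_right_mono qabs_nonneg)
      also have "\<dots> < e" using dY BX by (simp add: field_simps)
      finally show ?thesis .
    qed
    moreover have "qabs p ((X m - X n) * Y n) < e"
    proof -
      have "qabs p ((X m - X n) * Y n) \<le> qabs p (X m - X n) * BY"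
        using BY by (simp only: qabs_mult) (simp add: mult_left_mono qabs_nonneg)
      also have "\<dots> < e" using dX BY by (simp add: field_simps)
      finally show ?thesis .
    qed
    moreover have "X m * Y m - X n * Y n = X m * (Y m - Y n) + (X m - X n) * Y n"
      by (simp add: algebra_simps)
    ultimately show "qabs p (X m * Y m - X n * Y n) < e"
      using qabs_add_le_max[of "X m * (Y m - Y n)" "(X m - X n) * Y n"] by simp
  qed
qed

lemmas qp_cauchy_intros =
  qp_cauchy_const qp_cauchy_add qp_cauchy_uminus qp_cauchy_diff qp_cauchy_mult

lemma qabs_null_add:
  assumes "(\<lambda>n. qabs p (U n)) \<longlonglongrightarrow> 0" "(\<lambda>n. qabs p (V n)) \<longlonglongrightarrow> 0"
  shows "(\<lambda>n. qabs p (U n + V n)) \<longlonglongrightarrow> 0"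
proof (rule Lim_null_comparison[OF _ tendsto_add_zero[OF assms]])
  show "\<forall>\<^sub>F n in sequentially. norm (qabs p (U n + V n)) \<le> qabs p (U n) + qabs p (V n)"
    using qabs_add_le qabs_nonneg by simp
qed

lemma qabs_null_mult_bounded:
  assumes "(\<lambda>n. qabs p (U n)) \<longlonglongrightarrow> 0" "\<And>n. qabs p (V n) \<le> B"
  shows "(\<lambda>n. qabs p (V n * U n)) \<longlonglongrightarrow> 0"
proof (rule Lim_null_comparison[OF _ tendsto_mult_right_zero[OF assms(1), of B]])
  show "\<forall>\<^sub>F n in sequentially. norm (qabs p (V n * U n)) \<le> B * qabs p (U n)"
    using assms(2) qabs_nonneg by (simp add: qabs_mult mult_right_mono)
qed

lemma qp_equiv_refl: "qp_cauchy p X \<Longrightarrow> qp_equiv p X X"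
  unfolding qp_equiv_def by simp

lemma qp_equiv_sym: "qp_equiv p X Y \<Longrightarrow> qp_equiv p Y X"
  unfolding qp_equiv_def by (simp add: qabs_minus_commute)

lemma qp_equiv_trans: "qp_equiv p X Y \<Longrightarrow> qp_equiv p Y Z \<Longrightarrow> qp_equiv p X Z"
  unfolding qp_equiv_def using qabs_null_add[of "\<lambda>n. X n - Y n" "\<lambda>n. Y n - Z n"] by simp

lemma qp_equiv_add:
  "qp_equiv p X X' \<Longrightarrow> qp_equiv p Y Y' \<Longrightarrow> qp_equiv p (\<lambda>n. X n + Y n) (\<lambda>n. X' n + Y' n)"
  unfolding qp_equiv_def using qabs_null_add[of "\<lambda>n. X n - X' n" "\<lambda>n. Y n - Y' n"] qp_cauchy_add
  by (simp add: algebra_simps)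

lemma qp_equiv_uminus: "qp_equiv p X X' \<Longrightarrow> qp_equiv p (\<lambda>n. - X n) (\<lambda>n. - X' n)"
  unfolding qp_equiv_def using qp_cauchy_uminus by (simp add: qabs_minus_commute)

lemma qp_equiv_mult:
  assumes "qp_equiv p X X'" "qp_equiv p Y Y'"
  shows "qp_equiv p (\<lambda>n. X n * Y n) (\<lambda>n. X' n * Y' n)"
proof -
  have c: "qp_cauchy p X" "qp_cauchy p X'" "qp_cauchy p Y" "qp_cauchy p Y'"
    using assms unfolding qp_equiv_def by auto
  obtain BX where BX: "\<And>n. qabs p (X n) \<le> BX" using qp_cauchy_bounded[OF c(1)] by blast
  obtain BY where BY: "\<And>n. qabs p (Y' n) \<le> BY" using qp_cauchy_bounded[OF c(4)] by blast
  have "(\<lambda>n. qabs p (X n * (Y n - Y' n) + Y' n * (X n - X' n))) \<longlonglongrightarrow> 0"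
    using assms BX BY unfolding qp_equiv_def by (intro qabs_null_add qabs_null_mult_bounded) auto
  moreover have "\<And>n. X n * (Y n - Y' n) + Y' n * (X n - X' n) = X n * Y n - X' n * Y' n"
    by (simp add: algebra_simps)
  ultimately show ?thesis unfolding qp_equiv_def using c qp_cauchy_mult by simp
qed

lemma qp_of_eqI: "qp_equiv p X Y \<Longrightarrow> qp_of p X = qp_of p Y"
  unfolding qp_of_def using qp_equiv_sym qp_equiv_trans by blast

lemma qp_equiv_rep:
  assumes "qp_cauchy p X"
  shows "qp_equiv p X (qp_rep (qp_of p X))"
proof -
  have "X \<in> qp_of p X" using qp_equiv_refl[OF assms] by (simp add: qp_of_def)
  then have "qp_rep (qp_of p X) \<in> qp_of p X"
    unfolding qp_rep_def by (rule someI[of "\<lambda>Y. Y \<in> qp_of p X"])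
  then show ?thesis by (simp add: qp_of_def)
qed

lemma qp_of_in_Qp: "qp_cauchy p X \<Longrightarrow> qp_of p X \<in> Qp p"
  unfolding Qp_def by blast

lemma QpE:
  assumes "a \<in> Qp p"
  obtains X where "qp_cauchy p X" "a = qp_of p X"
  using assms unfolding Qp_def by blast

lemma qp_add_of:
  "qp_cauchy p X \<Longrightarrow> qp_cauchy p Y \<Longrightarrow> qp_add p (qp_of p X) (qp_of p Y) = qp_of p (\<lambda>n. X n + Y n)"
  unfolding qp_add_def by (rule qp_of_eqI, rule qp_equiv_sym, rule qp_equiv_add; rule qp_equiv_rep)

lemma qp_mult_of:
  "qp_cauchy p X \<Longrightarrow> qp_cauchy p Y \<Longrightarrow> qp_mult p (qp_of p X) (qp_of p Y) = qp_of p (\<lambda>n. X n * Y n)"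
  unfolding qp_mult_def by (rule qp_of_eqI, rule qp_equiv_sym, rule qp_equiv_mult; rule qp_equiv_rep)

lemma qp_neg_of: "qp_cauchy p X \<Longrightarrow> qp_neg p (qp_of p X) = qp_of p (\<lambda>n. - X n)"
  unfolding qp_neg_def by (rule qp_of_eqI, rule qp_equiv_sym, rule qp_equiv_uminus, rule qp_equiv_rep)

abbreviation qp_sub :: "qp \<Rightarrow> qp \<Rightarrow> qp" where
  "qp_sub a b \<equiv> qp_add p a (qp_neg p b)"

lemma qp_sub_of:
  "qp_cauchy p X \<Longrightarrow> qp_cauchy p Y \<Longrightarrow> qp_sub (qp_of p X) (qp_of p Y) = qp_of p (\<lambda>n. X n - Y n)"
  by (simp add: qp_neg_of qp_add_of qp_cauchy_intros)

lemmas qp_of_arith = qp_add_of qp_mult_of qp_neg_of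

lemma tendsto_qabs_qp_abs:
  assumes "qp_cauchy p X"
  shows "(\<lambda>n. qabs p (X n)) \<longlonglongrightarrow> qp_abs p (qp_of p X)"
proof -
  let ?R = "qp_rep (qp_of p X)"
  obtain L where L: "(\<lambda>n. qabs p (X n)) \<longlonglongrightarrow> L"
    using convergent_qabs_cauchy[OF assms] convergent_def by blast
  have "(\<lambda>n. qabs p (X n) - qabs p (?R n)) \<longlonglongrightarrow> 0"
  proof (rule Lim_null_comparison)
    show "(\<lambda>n. qabs p (X n - ?R n)) \<longlonglongrightarrow> 0"
      using qp_equiv_rep[OF assms] unfolding qp_equiv_def by simp
    show "\<forall>\<^sub>F n in sequentially. norm (qabs p (X n) - qabs p (?R n)) \<le> qabs p (X n - ?R n)"
      using abs_qabs_diff_le by simp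
  qed
  then have "(\<lambda>n. qabs p (?R n)) \<longlonglongrightarrow> L" using tendsto_diff[OF L] by fastforce
  then have "qp_abs p (qp_of p X) = L" unfolding qp_abs_def by (rule limI)
  then show ?thesis using L by simp
qed

lemma qp_abs_of_le:
  assumes "qp_cauchy p X" "\<forall>\<^sub>F n in sequentially. qabs p (X n) \<le> e"
  shows "qp_abs p (qp_of p X) \<le> e"
  using assms(2) by (intro tendsto_upperbound[OF tendsto_qabs_qp_abs[OF assms(1)]]) auto


lemma qp_zero_in_Qp: "qp_zero p \<in> Qp p"
  unfolding qp_zero_def by (rule qp_of_in_Qp[OF qp_cauchy_const])

lemma qp_one_in_Qp: "qp_one p \<in> Qp p"
  unfolding qp_one_def by (rule qp_of_in_Qp[OF qp_cauchy_const])

lemma qp_add_in_Qp: "a \<in> Qp p \<Longrightarrow> b \<in> Qp p \<Longrightarrow> qp_add p a b \<in> Qp p"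
  by (elim QpE) (simp add: qp_of_arith qp_cauchy_intros qp_of_in_Qp)

lemma qp_mult_in_Qp: "a \<in> Qp p \<Longrightarrow> b \<in> Qp p \<Longrightarrow> qp_mult p a b \<in> Qp p"
  by (elim QpE) (simp add: qp_of_arith qp_cauchy_intros qp_of_in_Qp)

lemma qp_neg_in_Qp: "a \<in> Qp p \<Longrightarrow> qp_neg p a \<in> Qp p"
  by (elim QpE) (simp add: qp_of_arith qp_cauchy_intros qp_of_in_Qp)

lemma qp_sub_in_Qp: "a \<in> Qp p \<Longrightarrow> b \<in> Qp p \<Longrightarrow> qp_sub a b \<in> Qp p"
  by (simp add: qp_add_in_Qp qp_neg_in_Qp)

lemma qp_add_zero: "a \<in> Qp p \<Longrightarrow> qp_add p a (qp_zero p) = a"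
  by (elim QpE) (simp add: qp_zero_def qp_of_arith qp_cauchy_intros)

lemma qp_zero_add: "a \<in> Qp p \<Longrightarrow> qp_add p (qp_zero p) a = a"
  by (elim QpE) (simp add: qp_zero_def qp_of_arith qp_cauchy_intros)

lemma qp_mult_zero: "a \<in> Qp p \<Longrightarrow> qp_mult p a (qp_zero p) = qp_zero p"
  by (elim QpE) (simp add: qp_zero_def qp_of_arith qp_cauchy_intros)

lemma qp_mult_one: "a \<in> Qp p \<Longrightarrow> qp_mult p a (qp_one p) = a"
  by (elim QpE) (simp add: qp_one_def qp_of_arith qp_cauchy_intros)

lemma qp_sub_zero_zero: "qp_sub (qp_zero p) (qp_zero p) = qp_zero p"
  by (simp add: qp_zero_def qp_of_arith qp_cauchy_intros)

lemma qp_mult_sub_distrib: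
  "a \<in> Qp p \<Longrightarrow> b \<in> Qp p \<Longrightarrow> c \<in> Qp p \<Longrightarrow>
    qp_sub (qp_mult p a b) (qp_mult p a c) = qp_mult p a (qp_sub b c)"
  by (elim QpE) (simp add: qp_of_arith qp_cauchy_intros algebra_simps)

lemma qp_sub_add_sub:
  "a \<in> Qp p \<Longrightarrow> b \<in> Qp p \<Longrightarrow> c \<in> Qp p \<Longrightarrow> d \<in> Qp p \<Longrightarrow>
    qp_sub (qp_add p a b) (qp_add p c d) = qp_add p (qp_sub a c) (qp_sub b d)"
  by (elim QpE) (simp add: qp_of_arith qp_cauchy_intros algebra_simps)

lemma qp_sub_add_cancel: "a \<in> Qp p \<Longrightarrow> b \<in> Qp p \<Longrightarrow> qp_add p (qp_sub a b) b = a"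
  by (elim QpE) (simp add: qp_of_arith qp_cauchy_intros)

lemma qp_add_sub_sub: "a \<in> Qp p \<Longrightarrow> b \<in> Qp p \<Longrightarrow> c \<in> Qp p \<Longrightarrow>
    qp_add p (qp_sub a b) (qp_sub b c) = qp_sub a c"
  by (elim QpE) (simp add: qp_of_arith qp_cauchy_intros algebra_simps)

lemma qp_neg_sub: "a \<in> Qp p \<Longrightarrow> b \<in> Qp p \<Longrightarrow> qp_neg p (qp_sub a b) = qp_sub b a"
  by (elim QpE) (simp add: qp_of_arith qp_cauchy_intros)

lemma qp_abs_of_const: "qp_abs p (qp_of p (\<lambda>_. c)) = qabs p c"
  using tendsto_qabs_qp_abs[OF qp_cauchy_const, of c] by (simp add: LIMSEQ_const_iff)

lemma qp_abs_zero: "qp_abs p (qp_zero p) = 0"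
  by (simp add: qp_zero_def qp_abs_of_const)

lemma qp_abs_one: "qp_abs p (qp_one p) = 1"
  by (simp add: qp_one_def qp_abs_of_const qabs_one)

lemma qp_abs_nonneg: "a \<in> Qp p \<Longrightarrow> qp_abs p a \<ge> 0"
  by (elim QpE) (simp add: tendsto_lowerbound[OF tendsto_qabs_qp_abs] qabs_nonneg)

lemma qp_abs_add_le_max:
  assumes "a \<in> Qp p" "b \<in> Qp p"
  shows "qp_abs p (qp_add p a b) \<le> max (qp_abs p a) (qp_abs p b)"
proof -
  obtain X Y where X: "qp_cauchy p X" "a = qp_of p X" and Y: "qp_cauchy p Y" "b = qp_of p Y"
    using assms by (metis QpE)
  have "(\<lambda>n. qabs p (X n + Y n)) \<longlonglongrightarrow> qp_abs p (qp_add p a b)"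
    using tendsto_qabs_qp_abs[OF qp_cauchy_add[OF X(1) Y(1)]] X Y by (simp add: qp_add_of)
  moreover have "(\<lambda>n. max (qabs p (X n)) (qabs p (Y n))) \<longlonglongrightarrow> max (qp_abs p a) (qp_abs p b)"
    unfolding X(2) Y(2) using X(1) Y(1) by (intro tendsto_max tendsto_qabs_qp_abs)
  ultimately show ?thesis by (rule LIMSEQ_le) (auto intro: qabs_add_le_max)
qed

lemma qp_abs_mult:
  assumes "a \<in> Qp p" "b \<in> Qp p"
  shows "qp_abs p (qp_mult p a b) = qp_abs p a * qp_abs p b"
proof -
  obtain X Y where X: "qp_cauchy p X" "a = qp_of p X" and Y: "qp_cauchy p Y" "b = qp_of p Y"
    using assms by (metis QpE)
  have "(\<lambda>n. qabs p (X n * Y n)) \<longlonglongrightarrow> qp_abs p (qp_mult p a b)"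
    using tendsto_qabs_qp_abs[OF qp_cauchy_mult[OF X(1) Y(1)]] X Y by (simp add: qp_mult_of)
  moreover have "(\<lambda>n. qabs p (X n) * qabs p (Y n)) \<longlonglongrightarrow> qp_abs p a * qp_abs p b"
    unfolding X(2) Y(2) using X(1) Y(1) by (intro tendsto_mult tendsto_qabs_qp_abs)
  ultimately show ?thesis by (simp add: qabs_mult LIMSEQ_unique)
qed

lemma qp_abs_neg:
  assumes "a \<in> Qp p"
  shows "qp_abs p (qp_neg p a) = qp_abs p a"
proof -
  obtain X where X: "qp_cauchy p X" "a = qp_of p X" using assms by (rule QpE)
  have "(\<lambda>n. qabs p (X n)) \<longlonglongrightarrow> qp_abs p (qp_neg p a)"
    using tendsto_qabs_qp_abs[OF qp_cauchy_uminus[OF X(1)]] X by (simp add: qp_neg_of qabs_uminus)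
  then show ?thesis using tendsto_qabs_qp_abs[OF X(1)] X(2) by (simp add: LIMSEQ_unique)
qed

lemma qp_abs_sub_le_max:
  "a \<in> Qp p \<Longrightarrow> b \<in> Qp p \<Longrightarrow> qp_abs p (qp_sub a b) \<le> max (qp_abs p a) (qp_abs p b)"
  by (metis qp_abs_add_le_max qp_abs_neg qp_neg_in_Qp)

lemma qp_abs_sub_commute: "a \<in> Qp p \<Longrightarrow> b \<in> Qp p \<Longrightarrow> qp_abs p (qp_sub a b) = qp_abs p (qp_sub b a)"
  by (metis qp_abs_neg qp_neg_sub qp_sub_in_Qp)

lemma qp_abs_sub_triangle:
  "a \<in> Qp p \<Longrightarrow> b \<in> Qp p \<Longrightarrow> c \<in> Qp p \<Longrightarrow>
    qp_abs p (qp_sub a c) \<le> max (qp_abs p (qp_sub a b)) (qp_abs p (qp_sub b c))"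
  by (metis qp_abs_add_le_max qp_add_sub_sub qp_sub_in_Qp)

lemma qp_abs_le_max_sub:
  "a \<in> Qp p \<Longrightarrow> b \<in> Qp p \<Longrightarrow> qp_abs p a \<le> max (qp_abs p (qp_sub a b)) (qp_abs p b)"
  by (metis qp_abs_add_le_max qp_sub_add_cancel qp_sub_in_Qp)


section \<open>Completeness\<close>

definition Qp_Cauchy :: "(nat \<Rightarrow> qp) \<Rightarrow> bool" where
  "Qp_Cauchy a \<longleftrightarrow> (\<forall>e>0. \<exists>N. \<forall>m\<ge>N. \<forall>n\<ge>N. qp_abs p (qp_sub (a m) (a n)) < e)"

definition qp_lim :: "(nat \<Rightarrow> qp) \<Rightarrow> qp" where
  "qp_lim a = (SOME b. b \<in> Qp p \<and> (\<lambda>n. qp_abs p (qp_sub (a n) b)) \<longlonglongrightarrow> 0)"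

lemma qp_abs_sub_of_const: "qp_abs p (qp_sub (qp_of p (\<lambda>_. x)) (qp_of p (\<lambda>_. y))) = qabs p (x - y)"
  by (simp add: qp_sub_of qp_cauchy_const qp_abs_of_const)

lemma qp_rational_approx:
  assumes "a \<in> Qp p" "e > 0"
  obtains c where "qp_abs p (qp_sub a (qp_of p (\<lambda>_. c))) \<le> e"
proof -
  obtain X where X: "qp_cauchy p X" "a = qp_of p X" using assms(1) by (rule QpE)
  then obtain N where N: "\<forall>m\<ge>N. \<forall>n\<ge>N. qabs p (X m - X n) < e"
    using assms(2) unfolding qp_cauchy_def by blast
  have "qp_abs p (qp_of p (\<lambda>m. X m - X N)) \<le> e"
    using N by (intro qp_abs_of_le qp_cauchy_diff X(1) qp_cauchy_const)
      (auto simp: eventually_sequentially intro!: exI[of _ N] less_imp_le)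
  then show thesis
    using X by (intro that[of "X N"]) (simp add: qp_sub_of qp_cauchy_const)
qed

lemma qp_cauchy_if_close_to_Qp_Cauchy:
  assumes a: "\<And>j. a j \<in> Qp p" "Qp_Cauchy a"
    and close: "(\<lambda>j. qp_abs p (qp_sub (a j) (qp_of p (\<lambda>_. q j)))) \<longlonglongrightarrow> 0"
  shows "qp_cauchy p q"
  unfolding qp_cauchy_def
proof (intro allI impI)
  fix e :: real
  assume "e > 0"
  define c where "c j = qp_of p (\<lambda>_. q j)" for j
  have c: "c j \<in> Qp p" for j
    unfolding c_def by (rule qp_of_in_Qp[OF qp_cauchy_const])
  obtain N1 where N1: "\<forall>j\<ge>N1. qp_abs p (qp_sub (a j) (c j)) < e"
    using order_tendstoD(2)[OF close \<open>e > 0\<close>] unfolding c_def eventually_sequentially by blast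
  obtain N2 where N2: "\<forall>m\<ge>N2. \<forall>n\<ge>N2. qp_abs p (qp_sub (a m) (a n)) < e"
    using a(2) \<open>e > 0\<close> unfolding Qp_Cauchy_def by blast
  show "\<exists>N. \<forall>m\<ge>N. \<forall>n\<ge>N. qabs p (q m - q n) < e"
  proof (intro exI allI impI)
    fix m n
    assume "max N1 N2 \<le> m" "max N1 N2 \<le> n"
    then have "qp_abs p (qp_sub (c m) (a m)) < e" "qp_abs p (qp_sub (a m) (a n)) < e"
      "qp_abs p (qp_sub (a n) (c n)) < e"
      using N1 N2 qp_abs_sub_commute[OF c a(1)] by auto
    moreover have "qp_abs p (qp_sub (c m) (c n)) \<le>
        max (qp_abs p (qp_sub (c m) (a m))) (max (qp_abs p (qp_sub (a m) (a n))) (qp_abs p (qp_sub (a n) (c n))))"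
      using qp_abs_sub_triangle[OF c a(1) c] qp_abs_sub_triangle[OF a(1) a(1) c]
      by (meson max.mono order_trans order_refl)
    ultimately show "qabs p (q m - q n) < e"
      unfolding c_def qp_abs_sub_of_const by linarith
  qed
qed

lemma qp_of_const_tendsto:
  assumes "qp_cauchy p q"
  shows "(\<lambda>n. qp_abs p (qp_sub (qp_of p (\<lambda>_. q n)) (qp_of p q))) \<longlonglongrightarrow> 0"
proof (rule LIMSEQ_I)
  fix e :: real
  assume "e > 0"
  then obtain N where N: "\<forall>m\<ge>N. \<forall>n\<ge>N. qabs p (q m - q n) < e / 2"
    using assms unfolding qp_cauchy_def by (meson half_gt_zero)
  have le: "qp_abs p (qp_sub (qp_of p (\<lambda>_. q n)) (qp_of p q)) \<le> e / 2" if "N \<le> n" for n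
    unfolding qp_sub_of[OF qp_cauchy_const assms] using N that
    by (intro qp_abs_of_le qp_cauchy_diff qp_cauchy_const assms)
      (auto simp: eventually_sequentially intro!: exI[of _ N] less_imp_le)
  have nonneg: "qp_abs p (qp_sub (qp_of p (\<lambda>_. q n)) (qp_of p q)) \<ge> 0" for n
    by (intro qp_abs_nonneg qp_sub_in_Qp qp_of_in_Qp qp_cauchy_const assms)
  show "\<exists>N. \<forall>n\<ge>N. norm (qp_abs p (qp_sub (qp_of p (\<lambda>_. q n)) (qp_of p q)) - 0) < e"
  proof (intro exI allI impI)
    fix n
    assume "N \<le> n"
    then show "norm (qp_abs p (qp_sub (qp_of p (\<lambda>_. q n)) (qp_of p q)) - 0) < e"
      using le[OF \<open>N \<le> n\<close>] nonneg[of n] \<open>e > 0\<close> by (simp add: abs_of_nonneg)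
  qed
qed

lemma qp_complete:
  assumes a: "\<And>j. a j \<in> Qp p" "Qp_Cauchy a"
  shows "\<exists>b\<in>Qp p. (\<lambda>n. qp_abs p (qp_sub (a n) b)) \<longlonglongrightarrow> 0"
proof -
  have "\<forall>j. \<exists>c. qp_abs p (qp_sub (a j) (qp_of p (\<lambda>_. c))) \<le> inverse (real (Suc j))"
    using qp_rational_approx[OF a(1)] by (metis inverse_positive_iff_positive of_nat_0_less_iff zero_less_Suc)
  then obtain q where q: "\<And>j. qp_abs p (qp_sub (a j) (qp_of p (\<lambda>_. q j))) \<le> inverse (real (Suc j))"
    by metis
  have in_Qp: "qp_of p (\<lambda>_. q j) \<in> Qp p" for j
    by (rule qp_of_in_Qp[OF qp_cauchy_const])
  have close: "(\<lambda>j. qp_abs p (qp_sub (a j) (qp_of p (\<lambda>_. q j)))) \<longlonglongrightarrow> 0"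
  proof (rule tendsto_sandwich[OF _ _ tendsto_const LIMSEQ_inverse_real_of_nat])
    show "\<forall>\<^sub>F j in sequentially. 0 \<le> qp_abs p (qp_sub (a j) (qp_of p (\<lambda>_. q j)))"
      by (intro always_eventually allI qp_abs_nonneg qp_sub_in_Qp a(1) in_Qp)
    show "\<forall>\<^sub>F j in sequentially. qp_abs p (qp_sub (a j) (qp_of p (\<lambda>_. q j))) \<le> inverse (real (Suc j))"
      by (intro always_eventually allI q)
  qed
  then have "qp_cauchy p q" by (rule qp_cauchy_if_close_to_Qp_Cauchy[OF a])
  have upper: "(\<lambda>n. max (qp_abs p (qp_sub (a n) (qp_of p (\<lambda>_. q n))))
                  (qp_abs p (qp_sub (qp_of p (\<lambda>_. q n)) (qp_of p q)))) \<longlonglongrightarrow> 0"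
    using tendsto_max[OF close qp_of_const_tendsto[OF \<open>qp_cauchy p q\<close>]] by simp
  have "(\<lambda>n. qp_abs p (qp_sub (a n) (qp_of p q))) \<longlonglongrightarrow> 0"
  proof (rule tendsto_sandwich[OF _ _ tendsto_const upper])
    show "\<forall>\<^sub>F n in sequentially. 0 \<le> qp_abs p (qp_sub (a n) (qp_of p q))"
      by (intro always_eventually allI qp_abs_nonneg qp_sub_in_Qp a(1) qp_of_in_Qp \<open>qp_cauchy p q\<close>)
    show "\<forall>\<^sub>F n in sequentially. qp_abs p (qp_sub (a n) (qp_of p q)) \<le>
        max (qp_abs p (qp_sub (a n) (qp_of p (\<lambda>_. q n)))) (qp_abs p (qp_sub (qp_of p (\<lambda>_. q n)) (qp_of p q)))"
      by (intro always_eventually allI qp_abs_sub_triangle a(1) in_Qp qp_of_in_Qp \<open>qp_cauchy p q\<close>)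
  qed
  then show ?thesis using qp_of_in_Qp[OF \<open>qp_cauchy p q\<close>] by blast
qed

lemma qp_lim:
  assumes "\<And>j. a j \<in> Qp p" "Qp_Cauchy a"
  shows "qp_lim a \<in> Qp p" "(\<lambda>n. qp_abs p (qp_sub (a n) (qp_lim a))) \<longlonglongrightarrow> 0"
  using someI_ex[OF qp_complete[OF assms, unfolded Bex_def]] unfolding qp_lim_def by auto

end

section \<open>Gauss norms\<close>

definition qp_series :: "nat \<Rightarrow> pser \<Rightarrow> bool" where
  "qp_series p f \<longleftrightarrow> (\<forall>k. f k \<in> Qp p)"

text \<open>The Gauss norm \<open>gnorm\<close> is a supremum in the reals and therefore meaningless for an
  unbounded family of coefficients; this is why boundedness appears as a side condition.\<close>

definition gauss_bounded :: "nat \<Rightarrow> real \<Rightarrow> pser \<Rightarrow> bool" where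
  "gauss_bounded p r f \<longleftrightarrow> bdd_above (range (\<lambda>k. qp_abs p (f k) * r ^ k))"

lemma gnorm_coeff_le: "gauss_bounded p r f \<Longrightarrow> qp_abs p (f k) * r ^ k \<le> gnorm p r f"
  unfolding gauss_bounded_def gnorm_def by (rule cSUP_upper) auto

lemma gnorm_le: "(\<And>k. qp_abs p (f k) * r ^ k \<le> C) \<Longrightarrow> gnorm p r f \<le> C"
  unfolding gnorm_def by (rule cSUP_least) auto

lemma gauss_boundedI: "(\<And>k. qp_abs p (f k) * r ^ k \<le> C) \<Longrightarrow> gauss_bounded p r f"
  unfolding gauss_bounded_def by (rule bdd_aboveI2) auto

lemma gauss_bounded_if_tendsto_zero:
  "(\<lambda>k. qp_abs p (f k) * r ^ k) \<longlonglongrightarrow> 0 \<Longrightarrow> gauss_bounded p r f"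
  unfolding gauss_bounded_def by (intro Bseq_bdd_above convergent_imp_Bseq convergentI)

lemma gnorm_le_max_coeffwise:
  assumes "\<And>k. qp_abs p (h k) \<le> max (qp_abs p (f k)) (qp_abs p (g k))"
    and "gauss_bounded p r f" "gauss_bounded p r g" "r \<ge> 0"
  shows "gauss_bounded p r h" "gnorm p r h \<le> max (gnorm p r f) (gnorm p r g)"
proof -
  have "qp_abs p (h k) * r ^ k \<le> max (gnorm p r f) (gnorm p r g)" for k
  proof -
    have "qp_abs p (h k) * r ^ k \<le> max (qp_abs p (f k)) (qp_abs p (g k)) * r ^ k"
      using assms(1,4) by (intro mult_right_mono) auto
    also have "\<dots> = max (qp_abs p (f k) * r ^ k) (qp_abs p (g k) * r ^ k)"
      using assms(4) by (simp add: max_mult_distrib_right)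
    also have "\<dots> \<le> max (gnorm p r f) (gnorm p r g)"
      using gnorm_coeff_le[OF assms(2)] gnorm_coeff_le[OF assms(3)] by (rule max.mono)
    finally show ?thesis .
  qed
  then show "gauss_bounded p r h" "gnorm p r h \<le> max (gnorm p r f) (gnorm p r g)"
    by (auto intro: gauss_boundedI gnorm_le)
qed

context padic
begin

lemma gnorm_nonneg:
  assumes "qp_series p f" "gauss_bounded p r f"
  shows "gnorm p r f \<ge> 0"
proof -
  have "0 \<le> qp_abs p (f 0) * r ^ 0" using assms(1) by (simp add: qp_series_def qp_abs_nonneg)
  also have "\<dots> \<le> gnorm p r f" by (rule gnorm_coeff_le[OF assms(2)])
  finally show ?thesis .
qed

lemma qp_series_ps_one: "qp_series p (ps_one p)"
  unfolding qp_series_def ps_one_def by (simp add: qp_one_in_Qp qp_zero_in_Qp)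

lemma qp_series_ps_sub: "qp_series p f \<Longrightarrow> qp_series p g \<Longrightarrow> qp_series p (ps_sub p f g)"
  unfolding qp_series_def ps_sub_def by (simp add: qp_sub_in_Qp)

lemma foldr_qp_add_in_Qp:
  "(\<And>x. x \<in> set xs \<Longrightarrow> h x \<in> Qp p) \<Longrightarrow> a \<in> Qp p \<Longrightarrow> foldr (qp_add p) (map h xs) a \<in> Qp p"
  by (induction xs) (auto intro: qp_add_in_Qp)

lemma qp_series_ps_mult: "qp_series p f \<Longrightarrow> qp_series p g \<Longrightarrow> qp_series p (ps_mult p f g)"
  unfolding qp_series_def ps_mult_def
  by (auto intro!: foldr_qp_add_in_Qp qp_zero_in_Qp qp_mult_in_Qp qp_add_in_Qp)

lemma qp_abs_foldr_add_le:
  assumes "\<And>x. x \<in> set xs \<Longrightarrow> h x \<in> Qp p \<and> qp_abs p (h x) \<le> C" "C \<ge> 0"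
  shows "qp_abs p (foldr (qp_add p) (map h xs) (qp_zero p)) \<le> C"
  using assms(1)
proof (induction xs)
  case Nil
  then show ?case using assms(2) by (simp add: qp_abs_zero)
next
  case (Cons x xs)
  have "foldr (qp_add p) (map h xs) (qp_zero p) \<in> Qp p"
    using Cons.prems by (intro foldr_qp_add_in_Qp qp_zero_in_Qp) auto
  then show ?case
    using Cons qp_abs_add_le_max[of "h x" "foldr (qp_add p) (map h xs) (qp_zero p)"] by fastforce
qed

lemma foldr_qp_add_sub:
  assumes "\<And>x. x \<in> set xs \<Longrightarrow> h x \<in> Qp p \<and> g x \<in> Qp p"
  shows "qp_sub (foldr (qp_add p) (map h xs) (qp_zero p)) (foldr (qp_add p) (map g xs) (qp_zero p))
       = foldr (qp_add p) (map (\<lambda>x. qp_sub (h x) (g x)) xs) (qp_zero p)"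
  using assms
proof (induction xs)
  case Nil
  then show ?case by (simp add: qp_sub_zero_zero)
next
  case (Cons x xs)
  have "foldr (qp_add p) (map h xs) (qp_zero p) \<in> Qp p" "foldr (qp_add p) (map g xs) (qp_zero p) \<in> Qp p"
    using Cons.prems by (intro foldr_qp_add_in_Qp qp_zero_in_Qp; auto)+
  then show ?case using Cons qp_sub_add_sub[of "h x" _ "g x"] by simp
qed

lemma foldr_qp_add_zeros:
  "(\<And>x. x \<in> set xs \<Longrightarrow> h x = qp_zero p) \<Longrightarrow> a \<in> Qp p \<Longrightarrow> foldr (qp_add p) (map h xs) a = a"
  by (induction xs) (auto simp: qp_zero_add)

lemma gnorm_ps_one_le: "gauss_bounded p r (ps_one p)" "gnorm p r (ps_one p) \<le> 1"
proof -
  have "qp_abs p (ps_one p k) * r ^ k \<le> 1" for k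
    by (cases k) (auto simp: ps_one_def qp_abs_one qp_abs_zero)
  then show "gauss_bounded p r (ps_one p)" "gnorm p r (ps_one p) \<le> 1"
    by (auto intro: gauss_boundedI gnorm_le)
qed

lemma gnorm_ps_sub_le_max:
  assumes "qp_series p f" "qp_series p g" "gauss_bounded p r f" "gauss_bounded p r g" "r \<ge> 0"
  shows "gauss_bounded p r (ps_sub p f g)" "gnorm p r (ps_sub p f g) \<le> max (gnorm p r f) (gnorm p r g)"
proof -
  have "qp_abs p (ps_sub p f g k) \<le> max (qp_abs p (f k)) (qp_abs p (g k))" for k
    using assms(1,2) unfolding ps_sub_def qp_series_def by (simp add: qp_abs_sub_le_max)
  from gnorm_le_max_coeffwise[OF this assms(3-5)]
  show "gauss_bounded p r (ps_sub p f g)" "gnorm p r (ps_sub p f g) \<le> max (gnorm p r f) (gnorm p r g)"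
    by auto
qed

lemma gnorm_ps_sub_triangle:
  assumes "qp_series p f" "qp_series p g" "qp_series p h"
    and "gauss_bounded p r (ps_sub p f g)" "gauss_bounded p r (ps_sub p g h)" "r \<ge> 0"
  shows "gnorm p r (ps_sub p f h) \<le> max (gnorm p r (ps_sub p f g)) (gnorm p r (ps_sub p g h))"
proof -
  have "qp_abs p (ps_sub p f h k) \<le> max (qp_abs p (ps_sub p f g k)) (qp_abs p (ps_sub p g h k))" for k
    using assms(1-3) unfolding ps_sub_def qp_series_def by (simp add: qp_abs_sub_triangle)
  from gnorm_le_max_coeffwise(2)[OF this assms(4-6)] show ?thesis .
qed

lemma gnorm_le_max_ps_sub:
  assumes "qp_series p f" "qp_series p g" "gauss_bounded p r (ps_sub p f g)" "gauss_bounded p r g" "r \<ge> 0"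
  shows "gnorm p r f \<le> max (gnorm p r (ps_sub p f g)) (gnorm p r g)"
proof -
  have "qp_abs p (f k) \<le> max (qp_abs p (ps_sub p f g k)) (qp_abs p (g k))" for k
    using assms(1,2) unfolding ps_sub_def qp_series_def by (simp add: qp_abs_le_max_sub)
  from gnorm_le_max_coeffwise(2)[OF this assms(3-5)] show ?thesis .
qed

lemma gnorm_ps_sub_self:
  assumes "qp_series p f"
  shows "gauss_bounded p r (ps_sub p f f)" "gnorm p r (ps_sub p f f) = 0"
proof -
  have zero: "qp_abs p (ps_sub p f f k) = 0" for k
  proof -
    obtain X where "qp_cauchy p X" "f k = qp_of p X"
      using assms unfolding qp_series_def by (metis QpE)
    then show ?thesis using qp_abs_of_const[of 0] by (simp add: ps_sub_def qp_sub_of)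
  qed
  then show "gauss_bounded p r (ps_sub p f f)" by (intro gauss_boundedI[of _ _ _ 0]) simp
  have "gnorm p r (ps_sub p f f) \<le> 0" by (rule gnorm_le) (simp add: zero)
  moreover have "gnorm p r (ps_sub p f f) \<ge> 0"
    using gnorm_coeff_le[OF \<open>gauss_bounded p r (ps_sub p f f)\<close>, of 0] zero by simp
  ultimately show "gnorm p r (ps_sub p f f) = 0" by simp
qed

lemma qp_abs_ps_mult_coeff_le:
  assumes f: "qp_series p f" "gauss_bounded p r f" and g: "qp_series p g" "gauss_bounded p r g"
    and "r > 0"
  shows "qp_abs p (ps_mult p f g k) * r ^ k \<le> gnorm p r f * gnorm p r g"
proof -
  let ?C = "gnorm p r f * gnorm p r g / r ^ k"
  have "qp_abs p (ps_mult p f g k) \<le> ?C"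
    unfolding ps_mult_def
  proof (rule qp_abs_foldr_add_le)
    show "?C \<ge> 0" using gnorm_nonneg f g \<open>r > 0\<close> by simp
    fix i
    assume "i \<in> set [0..<Suc k]"
    then have "i \<le> k" by auto
    have "qp_abs p (qp_mult p (f i) (g (k - i))) * r ^ k =
        (qp_abs p (f i) * r ^ i) * (qp_abs p (g (k - i)) * r ^ (k - i))"
      using f g \<open>i \<le> k\<close> unfolding qp_series_def by (simp add: qp_abs_mult power_add[symmetric])
    also have "\<dots> \<le> gnorm p r f * gnorm p r g"
      using f g \<open>r > 0\<close>
      by (intro mult_mono gnorm_coeff_le) (auto simp: qp_series_def qp_abs_nonneg gnorm_nonneg)
    finally have "qp_abs p (qp_mult p (f i) (g (k - i))) \<le> ?C"
      using \<open>r > 0\<close> by (simp add: field_simps)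
    moreover have "qp_mult p (f i) (g (k - i)) \<in> Qp p"
      using f g unfolding qp_series_def by (simp add: qp_mult_in_Qp)
    ultimately show "qp_mult p (f i) (g (k - i)) \<in> Qp p \<and> qp_abs p (qp_mult p (f i) (g (k - i))) \<le> ?C"
      by simp
  qed
  then show ?thesis using \<open>r > 0\<close> by (simp add: field_simps)
qed

lemma gnorm_ps_mult_le:
  assumes "qp_series p f" "gauss_bounded p r f" "qp_series p g" "gauss_bounded p r g" "r > 0"
  shows "gauss_bounded p r (ps_mult p f g)" "gnorm p r (ps_mult p f g) \<le> gnorm p r f * gnorm p r g"
  using qp_abs_ps_mult_coeff_le[OF assms] by (auto intro: gauss_boundedI gnorm_le)

lemma ps_mult_sub_distrib:
  assumes "qp_series p f" "qp_series p g" "qp_series p h"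
  shows "ps_sub p (ps_mult p f g) (ps_mult p f h) = ps_mult p f (ps_sub p g h)"
proof
  fix k
  have "ps_sub p (ps_mult p f g) (ps_mult p f h) k =
     foldr (qp_add p) (map (\<lambda>i. qp_sub (qp_mult p (f i) (g (k - i))) (qp_mult p (f i) (h (k - i)))) [0..<Suc k])
       (qp_zero p)"
    unfolding ps_sub_def ps_mult_def using assms unfolding qp_series_def
    by (subst foldr_qp_add_sub) (auto intro: qp_mult_in_Qp)
  also have "\<dots> = ps_mult p f (ps_sub p g h) k"
    unfolding ps_mult_def ps_sub_def using assms unfolding qp_series_def
    by (intro arg_cong2[where f="\<lambda>a b. foldr (qp_add p) a b"] map_cong refl qp_mult_sub_distrib) auto
  finally show "ps_sub p (ps_mult p f g) (ps_mult p f h) k = ps_mult p f (ps_sub p g h) k" .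
qed

lemma ps_mult_one:
  assumes "qp_series p f"
  shows "ps_mult p f (ps_one p) = f"
proof
  fix k
  have fk: "f k \<in> Qp p" using assms unfolding qp_series_def by auto
  have "ps_mult p f (ps_one p) k = foldr (qp_add p) (map (\<lambda>i. qp_mult p (f i) (ps_one p (k - i))) [0..<k])
          (qp_add p (qp_mult p (f k) (ps_one p 0)) (qp_zero p))"
    unfolding ps_mult_def by simp
  also have "\<dots> = foldr (qp_add p) (map (\<lambda>i. qp_mult p (f i) (ps_one p (k - i))) [0..<k]) (f k)"
    using fk by (simp add: ps_one_def qp_mult_one qp_add_zero)
  also have "\<dots> = f k"
    using assms fk unfolding qp_series_def by (intro foldr_qp_add_zeros) (auto simp: ps_one_def qp_mult_zero)
  finally show "ps_mult p f (ps_one p) k = f k" .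
qed

end

section \<open>Finite products\<close>

definition ps_prod_list :: "nat \<Rightarrow> (nat \<Rightarrow> pser) \<Rightarrow> nat list \<Rightarrow> pser \<Rightarrow> pser" where
  "ps_prod_list p G ns u = foldr (\<lambda>n acc. ps_mult p (G n) acc) ns u"

lemma ps_prod_list_Nil [simp]: "ps_prod_list p G [] u = u"
  by (simp add: ps_prod_list_def)

lemma ps_prod_list_Cons [simp]: "ps_prod_list p G (n # ns) u = ps_mult p (G n) (ps_prod_list p G ns u)"
  by (simp add: ps_prod_list_def)

lemma ps_prod_list_append: "ps_prod_list p G (ns @ ms) u = ps_prod_list p G ns (ps_prod_list p G ms u)"
  by (simp add: ps_prod_list_def)

lemma pprod_eq_ps_prod_list: "pprod p G N = ps_prod_list p G [1..<Suc N] (ps_one p)"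
  by (simp add: pprod_def ps_prod_list_def)

context padic
begin

lemma pprod_Suc:
  assumes "qp_series p (G (Suc N))"
  shows "pprod p G (Suc N) = ps_prod_list p G [1..<Suc N] (G (Suc N))"
  using ps_mult_one[OF assms] by (simp add: pprod_eq_ps_prod_list ps_prod_list_append)

lemma qp_series_ps_prod_list:
  "(\<And>n. n \<in> set ns \<Longrightarrow> qp_series p (G n)) \<Longrightarrow> qp_series p u \<Longrightarrow> qp_series p (ps_prod_list p G ns u)"
  by (induction ns) (auto intro: qp_series_ps_mult)

lemma gauss_bounded_ps_prod_list:
  assumes "\<And>n. n \<in> set ns \<Longrightarrow> qp_series p (G n) \<and> gauss_bounded p r (G n)"
    and "qp_series p u" "gauss_bounded p r u" "r > 0"
  shows "gauss_bounded p r (ps_prod_list p G ns u)"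
  using assms(1)
  by (induction ns) (auto intro: gnorm_ps_mult_le(1) qp_series_ps_prod_list assms(2-4))

lemma gnorm_ps_prod_list_le:
  assumes G: "\<And>n. n \<in> set ns \<Longrightarrow> qp_series p (G n) \<and> gauss_bounded p r (G n)"
    and "qp_series p u" "gauss_bounded p r u" "r > 0"
  shows "gnorm p r (ps_prod_list p G ns u) \<le> (\<Prod>n\<leftarrow>ns. gnorm p r (G n)) * gnorm p r u"
  using G
proof (induction ns)
  case (Cons n ns)
  let ?U = "ps_prod_list p G ns u"
  have Gn: "qp_series p (G n)" "gauss_bounded p r (G n)" using Cons.prems by auto
  have U: "qp_series p ?U" "gauss_bounded p r ?U"
    using Cons.prems assms(2-4) by (auto intro: qp_series_ps_prod_list gauss_bounded_ps_prod_list)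
  have "gnorm p r (ps_mult p (G n) ?U) \<le> gnorm p r (G n) * gnorm p r ?U"
    by (rule gnorm_ps_mult_le(2)[OF Gn U \<open>r > 0\<close>])
  also have "\<dots> \<le> gnorm p r (G n) * ((\<Prod>n\<leftarrow>ns. gnorm p r (G n)) * gnorm p r u)"
    using Cons gnorm_nonneg[OF Gn] by (intro mult_left_mono) auto
  finally show ?case by (simp add: mult.assoc)
qed simp

lemma gnorm_ps_prod_list_sub_le:
  assumes G: "\<And>n. n \<in> set ns \<Longrightarrow> qp_series p (G n) \<and> gauss_bounded p r (G n)"
    and "qp_series p u" "gauss_bounded p r u" "qp_series p v" "gauss_bounded p r v" "r > 0"
  shows "gnorm p r (ps_sub p (ps_prod_list p G ns u) (ps_prod_list p G ns v))
           \<le> (\<Prod>n\<leftarrow>ns. gnorm p r (G n)) * gnorm p r (ps_sub p u v)"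
  using G
proof (induction ns)
  case (Cons n ns)
  let ?U = "ps_prod_list p G ns u" and ?V = "ps_prod_list p G ns v"
  have Gn: "qp_series p (G n)" "gauss_bounded p r (G n)" using Cons.prems by auto
  have U: "qp_series p ?U" "gauss_bounded p r ?U" and V: "qp_series p ?V" "gauss_bounded p r ?V"
    using Cons.prems assms(2-6) by (auto intro: qp_series_ps_prod_list gauss_bounded_ps_prod_list)
  have UV: "qp_series p (ps_sub p ?U ?V)" "gauss_bounded p r (ps_sub p ?U ?V)"
    using qp_series_ps_sub[OF U(1) V(1)] gnorm_ps_sub_le_max(1)[OF U(1) V(1) U(2) V(2)] \<open>r > 0\<close>
    by auto
  have "gnorm p r (ps_sub p (ps_mult p (G n) ?U) (ps_mult p (G n) ?V))
      = gnorm p r (ps_mult p (G n) (ps_sub p ?U ?V))"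
    by (simp add: ps_mult_sub_distrib[OF Gn(1) U(1) V(1)])
  also have "\<dots> \<le> gnorm p r (G n) * gnorm p r (ps_sub p ?U ?V)"
    by (rule gnorm_ps_mult_le(2)[OF Gn UV \<open>r > 0\<close>])
  also have "\<dots> \<le> gnorm p r (G n) * ((\<Prod>n\<leftarrow>ns. gnorm p r (G n)) * gnorm p r (ps_sub p u v))"
    using Cons gnorm_nonneg[OF Gn] by (intro mult_left_mono) auto
  finally show ?case by (simp add: mult.assoc)
qed simp

end

section \<open>Products of type (lambda, mu)\<close>

lemma sum_shifted_geometric_le:
  fixes c q :: real
  assumes "c \<ge> 0" "0 < q" "q < 1" "finite S"
  shows "(\<Sum>n\<in>S. if m \<le> n then c * q ^ (n - m) else 0) \<le> c / (1 - q)"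
proof -
  define f where "f n = (if m \<le> n then c * q ^ (n - m) else 0)" for n
  have shift: "(\<lambda>n. f (n + m)) = (\<lambda>n. c * q ^ n)" by (simp add: f_def)
  have "summable (\<lambda>n. c * q ^ n)" using assms by (intro summable_mult summable_geometric) auto
  then have "summable f" using summable_iff_shift[of f m] shift by simp
  have "sum f S \<le> suminf f" using \<open>summable f\<close> assms by (intro sum_le_suminf) (auto simp: f_def)
  also have "suminf f = (\<Sum>n. f (n + m)) + (\<Sum>i<m. f i)"
    by (rule suminf_split_initial_segment[OF \<open>summable f\<close>])
  also have "\<dots> = c / (1 - q)"
    unfolding shift using assms by (simp add: f_def suminf_mult summable_geometric suminf_geometric)
  finally show ?thesis by (simp add: f_def)
qed

lemma prod_if_less_le_power:
  fixes a :: real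
  assumes "a \<ge> 1" "finite S"
  shows "(\<Prod>n\<in>S. if n < m then a else 1) \<le> a ^ m"
proof -
  have "(\<Prod>n\<in>S. if n < m then a else 1) = (\<Prod>n\<in>S \<inter> {n. n < m}. a) * (\<Prod>n\<in>S \<inter> - {n. n < m}. 1)"
    by (rule prod.If_cases[OF assms(2)])
  also have "\<dots> = a ^ card (S \<inter> {n. n < m})" by simp
  also have "\<dots> \<le> a ^ m"
    using card_mono[of "{..<m}" "S \<inter> {n. n < m}"] by (intro power_increasing assms(1)) auto
  finally show ?thesis .
qed

context padic
begin

lemma rho0_pos: "rho0 p > 0"
  unfolding rho0_def using real_p_gt_1 by simp

lemma pow_p_n0_le_rho0:
  assumes "0 < r" "r < 1"
  shows "r ^ (p ^ n0 p r) \<le> rho0 p"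
proof -
  obtain n where n: "r ^ n < rho0 p"
    using order_tendstoD(2)[OF LIMSEQ_power_zero[of r] rho0_pos] assms
    unfolding eventually_sequentially by auto
  have "n < 2 ^ n" by simp
  also have "2 ^ n \<le> p ^ n" using prime_ge_2_nat[OF prime_p] by (intro power_mono) auto
  finally have "r ^ (p ^ n) \<le> r ^ n" using assms by (intro power_decreasing) auto
  with n have "\<exists>n. r ^ (p ^ n) \<le> rho0 p" by (meson less_imp_le order_trans)
  then show ?thesis unfolding n0_def by (rule LeastI_ex)
qed

lemma n0_root_le:
  assumes "0 < r" "r < 1"
  shows "n0 p (r powr (1 / real p ^ m)) \<le> n0 p r + m"
proof -
  let ?N = "n0 p r"
  have "(r powr (1 / real p ^ m)) ^ (p ^ (?N + m)) = r powr (real (p ^ (?N + m)) * (1 / real p ^ m))"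
    using assms by (simp add: powr_power)
  also have "real (p ^ (?N + m)) * (1 / real p ^ m) = real (p ^ ?N)"
    using real_p_gt_1 by (simp add: power_add)
  also have "r powr real (p ^ ?N) = r ^ (p ^ ?N)" by (rule powr_realpow[OF assms(1)])
  finally have "(r powr (1 / real p ^ m)) ^ (p ^ (?N + m)) \<le> rho0 p" using pow_p_n0_le_rho0[OF assms] by simp
  then show ?thesis unfolding n0_def by (rule Least_le)
qed

end

locale prod_of_type = padic +
  fixes lam mu nu :: real and G :: "nat \<Rightarrow> pser"
  assumes lam_pos: "lam > 0" and mu_nonneg: "mu \<ge> 0"
    and G_inH: "\<And>n. n \<ge> 1 \<Longrightarrow> inH p (G n)"
    and gnorm_G_le: "\<And>n r. n \<ge> 1 \<Longrightarrow> 0 < r \<Longrightarrow> r < 1 \<Longrightarrow> gnorm p r (G n) \<le> real p powr mu"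
    and gnorm_G_sub_one_le: "\<And>n r. 0 < r \<Longrightarrow> r < 1 \<Longrightarrow> n \<ge> 1 \<Longrightarrow> n \<ge> n0 p r \<Longrightarrow>
      gnorm p r (ps_sub p (G n) (ps_one p)) \<le> real p powr nu * real p powr (- lam * (real n - real (n0 p r)))"
begin

definition decay :: real where
  "decay = real p powr (- lam)"

definition partial_prod_bound :: "real \<Rightarrow> real" where
  "partial_prod_bound r = (real p powr mu) ^ n0 p r * exp (real p powr nu / (1 - decay))"

definition tail_bound :: "real \<Rightarrow> nat \<Rightarrow> real" where
  "tail_bound r N = partial_prod_bound r * real p powr nu * decay ^ (Suc N - n0 p r)"

lemma decay_pos: "0 < decay" and decay_less_1: "decay < 1"
  unfolding decay_def using real_p_gt_1 lam_pos by (auto intro: powr_less_one)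

lemma powr_mu_ge_1: "real p powr mu \<ge> 1"
  using real_p_gt_1 mu_nonneg by (simp add: ge_one_powr_ge_zero)

lemma partial_prod_bound_pos: "partial_prod_bound r > 0"
  unfolding partial_prod_bound_def using real_p_gt_1 by simp

lemma tail_bound_nonneg: "tail_bound r N \<ge> 0"
  unfolding tail_bound_def using partial_prod_bound_pos[of r] decay_pos by simp

lemma tail_bound_antimono: "n0 p r \<le> N \<Longrightarrow> N \<le> M \<Longrightarrow> tail_bound r M \<le> tail_bound r N"
  unfolding tail_bound_def using partial_prod_bound_pos[of r] decay_pos decay_less_1
  by (intro mult_left_mono power_decreasing) auto

lemma tail_bound_tendsto_zero: "tail_bound r \<longlonglongrightarrow> 0"
proof (rule LIMSEQ_offset[where k = "n0 p r"])
  have "(\<lambda>N. partial_prod_bound r * real p powr nu * decay ^ Suc N) \<longlonglongrightarrow> 0"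
    using decay_pos decay_less_1 by (intro tendsto_mult_right_zero LIMSEQ_Suc LIMSEQ_power_zero) auto
  then show "(\<lambda>N. tail_bound r (N + n0 p r)) \<longlonglongrightarrow> 0" by (simp add: tail_bound_def)
qed

lemma G_series: "n \<ge> 1 \<Longrightarrow> qp_series p (G n)"
  using G_inH by (simp add: inH_def qp_series_def)

lemma G_gauss_bounded: "n \<ge> 1 \<Longrightarrow> 0 < r \<Longrightarrow> r < 1 \<Longrightarrow> gauss_bounded p r (G n)"
  using G_inH by (simp add: inH_def gauss_bounded_if_tendsto_zero)

lemma G_series_and_bounded:
  "0 < r \<Longrightarrow> r < 1 \<Longrightarrow> n \<in> set [1..<Suc N] \<Longrightarrow> qp_series p (G n) \<and> gauss_bounded p r (G n)"
  by (auto intro: G_series G_gauss_bounded)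

lemma gnorm_G_sub_one_le_decay:
  assumes "0 < r" "r < 1" "n \<ge> 1" "n \<ge> n0 p r"
  shows "gnorm p r (ps_sub p (G n) (ps_one p)) \<le> real p powr nu * decay ^ (n - n0 p r)"
proof -
  have "real p powr (- lam * (real n - real (n0 p r))) = decay powr real (n - n0 p r)"
    using assms(4) by (simp add: decay_def powr_powr of_nat_diff)
  also have "\<dots> = decay ^ (n - n0 p r)" using decay_pos by (simp add: powr_realpow)
  finally show ?thesis using gnorm_G_sub_one_le[OF assms] by simp
qed

lemma gnorm_G_le_decay:
  assumes "0 < r" "r < 1" "n \<ge> 1" "n \<ge> n0 p r"
  shows "gnorm p r (G n) \<le> 1 + real p powr nu * decay ^ (n - n0 p r)"
proof -
  have "gauss_bounded p r (ps_sub p (G n) (ps_one p))"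
    using assms by (intro gnorm_ps_sub_le_max(1) G_series G_gauss_bounded qp_series_ps_one gnorm_ps_one_le) auto
  then have "gnorm p r (G n) \<le> max (gnorm p r (ps_sub p (G n) (ps_one p))) (gnorm p r (ps_one p))"
    using assms by (intro gnorm_le_max_ps_sub G_series qp_series_ps_one gnorm_ps_one_le) auto
  also have "\<dots> \<le> 1 + real p powr nu * decay ^ (n - n0 p r)"
  proof (intro max.boundedI)
    have "0 \<le> real p powr nu * decay ^ (n - n0 p r)" using decay_pos by simp
    then show "gnorm p r (ps_one p) \<le> 1 + real p powr nu * decay ^ (n - n0 p r)"
      using gnorm_ps_one_le(2)[of r] by linarith
  qed (use gnorm_G_sub_one_le_decay[OF assms] in simp)
  finally show ?thesis .
qed

lemma prod_gnorm_G_le: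
  assumes "0 < r" "r < 1"
  shows "(\<Prod>n\<leftarrow>[1..<Suc N]. gnorm p r (G n)) \<le> partial_prod_bound r"
proof -
  let ?m = "n0 p r" and ?S = "{1..<Suc N}"
  define A where "A n = (if n < ?m then real p powr mu else 1)" for n
  define f where "f n = (if ?m \<le> n then real p powr nu * decay ^ (n - ?m) else 0)" for n
  have f_nonneg: "f n \<ge> 0" for n unfolding f_def using decay_pos by simp
  have "(\<Prod>n\<leftarrow>[1..<Suc N]. gnorm p r (G n)) = (\<Prod>n\<in>?S. gnorm p r (G n))"
    by (metis distinct_upt set_upt prod.distinct_set_conv_list)
  also have "\<dots> \<le> (\<Prod>n\<in>?S. A n * (1 + f n))"
  proof (rule prod_mono)
    fix n
    assume "n \<in> ?S"
    then have "n \<ge> 1" by auto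
    then show "0 \<le> gnorm p r (G n) \<and> gnorm p r (G n) \<le> A n * (1 + f n)"
      using gnorm_nonneg[OF G_series G_gauss_bounded] gnorm_G_le gnorm_G_le_decay assms
      by (auto simp: A_def f_def)
  qed
  also have "\<dots> = (\<Prod>n\<in>?S. A n) * (\<Prod>n\<in>?S. 1 + f n)"
    by (rule prod.distrib)
  also have "\<dots> \<le> (real p powr mu) ^ ?m * exp (real p powr nu / (1 - decay))"
  proof (rule mult_mono)
    show "(\<Prod>n\<in>?S. A n) \<le> (real p powr mu) ^ ?m"
      unfolding A_def by (rule prod_if_less_le_power[OF powr_mu_ge_1]) auto
    have "(\<Prod>n\<in>?S. 1 + f n) \<le> exp (sum f ?S)"
      using f_nonneg by (rule prod_le_exp_sum)
    also have "\<dots> \<le> exp (real p powr nu / (1 - decay))"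
      unfolding f_def using sum_shifted_geometric_le[of "real p powr nu" decay ?S ?m] decay_pos decay_less_1
      by simp
    finally show "(\<Prod>n\<in>?S. 1 + f n) \<le> exp (real p powr nu / (1 - decay))" .
    show "0 \<le> (\<Prod>n\<in>?S. 1 + f n)" using f_nonneg by (simp add: prod_nonneg add_nonneg_nonneg)
  qed simp
  finally show ?thesis unfolding partial_prod_bound_def .
qed

lemma pprod_series: "qp_series p (pprod p G N)"
  unfolding pprod_eq_ps_prod_list by (intro qp_series_ps_prod_list qp_series_ps_one G_series) auto

lemma gnorm_pprod_le:
  assumes "0 < r" "r < 1"
  shows "gauss_bounded p r (pprod p G N)" "gnorm p r (pprod p G N) \<le> partial_prod_bound r"
proof -
  show "gauss_bounded p r (pprod p G N)"
    unfolding pprod_eq_ps_prod_list using assms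
    by (intro gauss_bounded_ps_prod_list G_series_and_bounded qp_series_ps_one gnorm_ps_one_le) auto
  have "gnorm p r (pprod p G N) \<le> (\<Prod>n\<leftarrow>[1..<Suc N]. gnorm p r (G n)) * gnorm p r (ps_one p)"
    unfolding pprod_eq_ps_prod_list using assms
    by (intro gnorm_ps_prod_list_le G_series_and_bounded qp_series_ps_one gnorm_ps_one_le) auto
  also have "\<dots> \<le> partial_prod_bound r * 1"
    using prod_gnorm_G_le[OF assms] gnorm_ps_one_le(2) less_imp_le[OF partial_prod_bound_pos]
      gnorm_nonneg[OF qp_series_ps_one gnorm_ps_one_le(1)]
    by (intro mult_mono) auto
  finally show "gnorm p r (pprod p G N) \<le> partial_prod_bound r" by simp
qed

lemma gnorm_pprod_Suc_sub_le:
  assumes "0 < r" "r < 1" "Suc N \<ge> n0 p r"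
  shows "gnorm p r (ps_sub p (pprod p G (Suc N)) (pprod p G N)) \<le> tail_bound r N"
proof -
  have GS: "qp_series p (G (Suc N))" "gauss_bounded p r (G (Suc N))"
    using assms by (auto intro: G_series G_gauss_bounded)
  have "gnorm p r (ps_sub p (pprod p G (Suc N)) (pprod p G N))
      \<le> (\<Prod>n\<leftarrow>[1..<Suc N]. gnorm p r (G n)) * gnorm p r (ps_sub p (G (Suc N)) (ps_one p))"
    unfolding pprod_Suc[of G N, OF GS(1)] pprod_eq_ps_prod_list[of p G N] using assms GS
    by (intro gnorm_ps_prod_list_sub_le G_series_and_bounded qp_series_ps_one gnorm_ps_one_le) auto
  also have "\<dots> \<le> partial_prod_bound r * (real p powr nu * decay ^ (Suc N - n0 p r))"
  proof (rule mult_mono)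
    show "gnorm p r (ps_sub p (G (Suc N)) (ps_one p)) \<le> real p powr nu * decay ^ (Suc N - n0 p r)"
      using gnorm_G_sub_one_le_decay assms by simp
    show "0 \<le> gnorm p r (ps_sub p (G (Suc N)) (ps_one p))"
      using assms GS
      by (intro gnorm_nonneg qp_series_ps_sub qp_series_ps_one gnorm_ps_sub_le_max(1) gnorm_ps_one_le) auto
  qed (use prod_gnorm_G_le[OF assms(1,2)] less_imp_le[OF partial_prod_bound_pos] in auto)
  finally show ?thesis by (simp add: tail_bound_def mult.assoc)
qed

text \<open>By the ultrametric inequality the whole tail, not only each increment, is bounded by
  \<open>tail_bound r N\<close>.\<close>

lemma gnorm_pprod_sub_le:
  assumes "0 < r" "r < 1" "n0 p r \<le> N" "N \<le> K"
  shows "gauss_bounded p r (ps_sub p (pprod p G K) (pprod p G N))"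
    "gnorm p r (ps_sub p (pprod p G K) (pprod p G N)) \<le> tail_bound r N"
proof -
  have bounded: "gauss_bounded p r (ps_sub p (pprod p G K') (pprod p G N'))" for K' N'
    using assms by (intro gnorm_ps_sub_le_max(1) pprod_series gnorm_pprod_le) auto
  then show "gauss_bounded p r (ps_sub p (pprod p G K) (pprod p G N))" .
  show "gnorm p r (ps_sub p (pprod p G K) (pprod p G N)) \<le> tail_bound r N"
    using assms(4)
  proof (induction K rule: dec_induct)
    case base
    then show ?case using gnorm_ps_sub_self(2)[OF pprod_series] tail_bound_nonneg by simp
  next
    case (step M)
    have "gnorm p r (ps_sub p (pprod p G (Suc M)) (pprod p G N))
        \<le> max (gnorm p r (ps_sub p (pprod p G (Suc M)) (pprod p G M))) (gnorm p r (ps_sub p (pprod p G M) (pprod p G N)))"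
      using assms by (intro gnorm_ps_sub_triangle pprod_series bounded) auto
    moreover have "gnorm p r (ps_sub p (pprod p G (Suc M)) (pprod p G M)) \<le> tail_bound r M"
      using gnorm_pprod_Suc_sub_le[OF assms(1,2), of M] step.hyps assms(3) by simp
    moreover have "tail_bound r M \<le> tail_bound r N"
      using tail_bound_antimono step.hyps assms(3) by simp
    ultimately show ?case using step.IH by simp
  qed
qed


lemma pprod_coeff_in_Qp: "pprod p G N k \<in> Qp p"
  using pprod_series unfolding qp_series_def by blast

lemma qp_abs_pprod_coeff_sub_le:
  assumes "0 < r" "r < 1" "n0 p r \<le> N" "N \<le> M"
  shows "qp_abs p (qp_sub (pprod p G M k) (pprod p G N k)) * r ^ k \<le> tail_bound r N"
  using gnorm_coeff_le[OF gnorm_pprod_sub_le(1)[OF assms], of k] gnorm_pprod_sub_le(2)[OF assms]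
  unfolding ps_sub_def by linarith

lemma Qp_Cauchy_pprod_coeff: "Qp_Cauchy (\<lambda>N. pprod p G N k)"
  unfolding Qp_Cauchy_def
proof (intro allI impI)
  fix e :: real
  assume "e > 0"
  define r :: real where "r = 1 / 2"
  have r: "0 < r" "r < 1" by (simp_all add: r_def)
  obtain N0 where N0: "\<And>N. N \<ge> N0 \<Longrightarrow> tail_bound r N < e * r ^ k"
    using order_tendstoD(2)[OF tail_bound_tendsto_zero, of "e * r ^ k"] \<open>e > 0\<close> r
    unfolding eventually_sequentially by auto
  have close: "qp_abs p (qp_sub (pprod p G m k) (pprod p G n k)) < e"
    if "max N0 (n0 p r) \<le> n" "n \<le> m" for m n
  proof -
    have "qp_abs p (qp_sub (pprod p G m k) (pprod p G n k)) * r ^ k < e * r ^ k"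
      using qp_abs_pprod_coeff_sub_le[OF r _ \<open>n \<le> m\<close>, of k] N0[of n] that by fastforce
    then show ?thesis using r by simp
  qed
  show "\<exists>N. \<forall>m\<ge>N. \<forall>n\<ge>N. qp_abs p (qp_sub (pprod p G m k) (pprod p G n k)) < e"
  proof (intro exI allI impI)
    fix m n
    assume "max N0 (n0 p r) \<le> m" "max N0 (n0 p r) \<le> n"
    then show "qp_abs p (qp_sub (pprod p G m k) (pprod p G n k)) < e"
      using close[of n m] close[of m n] qp_abs_sub_commute[OF pprod_coeff_in_Qp pprod_coeff_in_Qp]
      by (cases "n \<le> m") auto
  qed
qed

definition prod_lim :: pser where
  "prod_lim k = qp_lim (\<lambda>N. pprod p G N k)"

lemma prod_lim_in_Qp: "prod_lim k \<in> Qp p"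
  and prod_lim_tendsto: "(\<lambda>N. qp_abs p (qp_sub (pprod p G N k) (prod_lim k))) \<longlonglongrightarrow> 0"
  unfolding prod_lim_def by (intro qp_lim pprod_coeff_in_Qp Qp_Cauchy_pprod_coeff)+

lemma qp_abs_pprod_sub_prod_lim_le:
  assumes "0 < r" "r < 1" "n0 p r \<le> N"
  shows "qp_abs p (qp_sub (pprod p G N k) (prod_lim k)) * r ^ k \<le> tail_bound r N"
proof -
  let ?B = "tail_bound r N / r ^ k" and ?d = "\<lambda>M. qp_abs p (qp_sub (pprod p G M k) (prod_lim k))"
  have "?d N \<le> max ?B (?d M)" if "N \<le> M" for M
  proof -
    have "?d N \<le> max (qp_abs p (qp_sub (pprod p G N k) (pprod p G M k))) (?d M)"
      by (rule qp_abs_sub_triangle[OF pprod_coeff_in_Qp pprod_coeff_in_Qp prod_lim_in_Qp])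
    moreover have "qp_abs p (qp_sub (pprod p G N k) (pprod p G M k)) \<le> ?B"
      using qp_abs_pprod_coeff_sub_le[OF assms that, of k] assms
        qp_abs_sub_commute[OF pprod_coeff_in_Qp pprod_coeff_in_Qp, of N k M k]
      by (simp add: field_simps)
    ultimately show ?thesis by (meson max.mono order_refl order_trans)
  qed
  then have "?d N \<le> max ?B 0"
    by (intro LIMSEQ_le_const[OF tendsto_max[OF tendsto_const prod_lim_tendsto]]) auto
  also have "\<dots> = ?B" using tail_bound_nonneg[of r N] assms by simp
  finally show ?thesis using assms by (simp add: field_simps)
qed

lemma qp_abs_prod_lim_le:
  assumes "0 < r" "r < 1"
  shows "qp_abs p (prod_lim k) * r ^ k \<le> partial_prod_bound r"
proof -
  have "qp_abs p (prod_lim k) * r ^ k \<le> max (tail_bound r N) (partial_prod_bound r)"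
    if "n0 p r \<le> N" for N
  proof -
    have "qp_abs p (prod_lim k) \<le> max (qp_abs p (qp_sub (prod_lim k) (pprod p G N k))) (qp_abs p (pprod p G N k))"
      by (rule qp_abs_le_max_sub[OF prod_lim_in_Qp pprod_coeff_in_Qp])
    then have "qp_abs p (prod_lim k) * r ^ k \<le>
        max (qp_abs p (qp_sub (prod_lim k) (pprod p G N k)) * r ^ k) (qp_abs p (pprod p G N k) * r ^ k)"
      using assms by (metis max_mult_distrib_right less_imp_le mult_right_mono zero_less_power)
    moreover have "qp_abs p (qp_sub (prod_lim k) (pprod p G N k)) * r ^ k \<le> tail_bound r N"
      using qp_abs_pprod_sub_prod_lim_le[OF assms that, of k]
        qp_abs_sub_commute[OF prod_lim_in_Qp pprod_coeff_in_Qp] by simp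
    moreover have "qp_abs p (pprod p G N k) * r ^ k \<le> partial_prod_bound r"
      using gnorm_coeff_le[OF gnorm_pprod_le(1)[OF assms]] gnorm_pprod_le(2)[OF assms] order_trans by blast
    ultimately show ?thesis by (meson max.mono order_trans)
  qed
  then have "qp_abs p (prod_lim k) * r ^ k \<le> max 0 (partial_prod_bound r)"
    by (intro LIMSEQ_le_const[OF tendsto_max[OF tail_bound_tendsto_zero tendsto_const]]) auto
  then show ?thesis using partial_prod_bound_pos[of r] by simp
qed

lemma gnorm_prod_lim_le:
  assumes "0 < r" "r < 1"
  shows "gnorm p r prod_lim \<le> partial_prod_bound r"
  using qp_abs_prod_lim_le[OF assms] by (rule gnorm_le)

lemma inH_prod_lim: "inH p prod_lim"
  unfolding inH_def
proof (intro conjI allI impI)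
  show "prod_lim k \<in> Qp p" for k by (rule prod_lim_in_Qp)
  fix r :: real
  assume r: "0 < r \<and> r < 1"
  define s where "s = (1 + r) / 2"
  have s: "0 < s" "s < 1" "r < s" using r by (auto simp: s_def)
  have rs: "0 < r / s" "r / s < 1" using s r by auto
  show "(\<lambda>k. qp_abs p (prod_lim k) * r ^ k) \<longlonglongrightarrow> 0"
  proof (rule tendsto_sandwich[of "\<lambda>_. 0" _ _ "\<lambda>k. partial_prod_bound s * (r / s) ^ k"])
    show "\<forall>\<^sub>F k in sequentially. 0 \<le> qp_abs p (prod_lim k) * r ^ k"
      using qp_abs_nonneg[OF prod_lim_in_Qp] r by simp
    show "\<forall>\<^sub>F k in sequentially. qp_abs p (prod_lim k) * r ^ k \<le> partial_prod_bound s * (r / s) ^ k"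
    proof (rule always_eventually, rule allI)
      fix k
      have "qp_abs p (prod_lim k) * r ^ k = (qp_abs p (prod_lim k) * s ^ k) * (r / s) ^ k"
        using s by (simp add: power_divide)
      also have "\<dots> \<le> partial_prod_bound s * (r / s) ^ k"
        using qp_abs_prod_lim_le[OF s(1,2)] rs by (intro mult_right_mono) auto
      finally show "qp_abs p (prod_lim k) * r ^ k \<le> partial_prod_bound s * (r / s) ^ k" .
    qed
    show "(\<lambda>k. partial_prod_bound s * (r / s) ^ k) \<longlonglongrightarrow> 0"
      using rs by (intro tendsto_mult_right_zero LIMSEQ_power_zero) auto
  qed simp
qed

lemma conv_H_prod_lim: "conv_H p (pprod p G) prod_lim"
  unfolding conv_H_def
proof (intro allI impI)
  fix r :: real
  assume r: "0 < r \<and> r < 1"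
  have upper: "gnorm p r (ps_sub p (pprod p G N) prod_lim) \<le> tail_bound r N" if "n0 p r \<le> N" for N
    using qp_abs_pprod_sub_prod_lim_le[of r N] r that unfolding ps_sub_def by (intro gnorm_le) auto
  have lower: "0 \<le> gnorm p r (ps_sub p (pprod p G N) prod_lim)" if "n0 p r \<le> N" for N
  proof (rule gnorm_nonneg)
    show "qp_series p (ps_sub p (pprod p G N) prod_lim)"
      using pprod_series prod_lim_in_Qp by (intro qp_series_ps_sub) (auto simp: qp_series_def)
    show "gauss_bounded p r (ps_sub p (pprod p G N) prod_lim)"
      using qp_abs_pprod_sub_prod_lim_le[of r N] r that unfolding ps_sub_def by (intro gauss_boundedI) auto
  qed
  show "(\<lambda>N. gnorm p r (ps_sub p (pprod p G N) prod_lim)) \<longlonglongrightarrow> 0"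
  proof (rule tendsto_sandwich[of "\<lambda>_. 0" _ _ "tail_bound r"])
    show "\<forall>\<^sub>F N in sequentially. 0 \<le> gnorm p r (ps_sub p (pprod p G N) prod_lim)"
      unfolding eventually_sequentially using lower by blast
    show "\<forall>\<^sub>F N in sequentially. gnorm p r (ps_sub p (pprod p G N) prod_lim) \<le> tail_bound r N"
      unfolding eventually_sequentially using upper by blast
  qed (auto intro: tail_bound_tendsto_zero)
qed

lemma order_H_prod_lim_le: "order_H p prod_lim \<le> ereal mu"
proof -
  define rho :: real where "rho = 1 / 2"
  have rho: "0 < rho" "rho < 1" by (simp_all add: rho_def)
  let ?r = "\<lambda>m::nat. rho powr (1 / real p ^ m)"
  let ?B = "exp (real p powr nu / (1 - decay))"
  have r: "0 < ?r m" "?r m < 1" for m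
  proof -
    show "0 < ?r m" using rho by simp
    have "?r m < 1 powr (1 / real p ^ m)" using rho real_p_gt_1 by (intro powr_less_mono2) auto
    then show "?r m < 1" by simp
  qed
  have "real p powr (- real m * mu) * gnorm p (?r m) prod_lim \<le> (real p powr mu) ^ n0 p rho * ?B" for m
  proof -
    have "gnorm p (?r m) prod_lim \<le> partial_prod_bound (?r m)" by (rule gnorm_prod_lim_le[OF r])
    also have "\<dots> \<le> (real p powr mu) ^ (n0 p rho + m) * ?B"
      unfolding partial_prod_bound_def using powr_mu_ge_1 n0_root_le[OF rho, of m]
      by (intro mult_right_mono power_increasing) auto
    finally have "real p powr (- real m * mu) * gnorm p (?r m) prod_lim \<le>
        real p powr (- real m * mu) * ((real p powr mu) ^ (n0 p rho + m) * ?B)"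
      by (intro mult_left_mono) auto
    also have "\<dots> = (real p powr mu) ^ n0 p rho * ?B * (real p powr (- real m * mu) * (real p powr mu) ^ m)"
      by (simp add: power_add)
    also have "real p powr (- real m * mu) * (real p powr mu) ^ m = 1"
      using real_p_gt_1 by (simp add: powr_power powr_add[symmetric])
    finally show ?thesis by simp
  qed
  then have "bdd_above (range (\<lambda>m::nat. real p powr (- real m * mu) * gnorm p (rho powr (1 / real p ^ m)) prod_lim))"
    by (intro bdd_aboveI2)
  then show ?thesis
    unfolding order_H_def using rho by (intro Inf_lower) blast
qed

end

theorem mainTheorem4:
  fixes p :: nat and lam mu :: real and G :: "nat \<Rightarrow> pser"
  assumes "prime p" and "odd p"
    and "lam > 0" and "mu \<ge> 0"
    and "\<forall>n\<ge>1. inH p (G n)"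
    and "prod_type p G lam mu"
  shows "\<exists>g. inH p g \<and> conv_H p (pprod p G) g \<and> order_H p g \<le> ereal mu"
proof -
  obtain nu where "\<forall>r. 0 < r \<and> r < 1 \<longrightarrow> (\<forall>n\<ge>1. n \<ge> n0 p r \<longrightarrow>
      gnorm p r (ps_sub p (G n) (ps_one p)) \<le> real p powr nu * real p powr (- lam * (real n - real (n0 p r))))"
    using assms(6) unfolding prod_type_def by blast
  then interpret prod_of_type p lam mu nu G
    using assms unfolding prod_type_def by unfold_locales auto
  show ?thesis using inH_prod_lim conv_H_prod_lim order_H_prod_lim_le by blast
qed

end
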